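(* Let $k\in\{1,2,3\}$. There do not exist smooth vector fields $C$ and $L_n$ ($n\in\mathbb{Z}$) on $\mathbb{R}^k$ with $C$ not identically zero satisfying the Virasoro relations \[ [L_m,L_n]=(m-n)L_{m+n}+\tfrac{1}{12}m(m^2-1)\delta_{m,-n}C,\qquad [L_m,C]=0,\qquad m,n\in\mathbb{Z}. \] That is, there are no realizations of the Virasoro algebra with nonzero central element by vector fields on $\mathbb{R}^k$, $k\le 3$.
   Context: The commutator of vector fields is $[Q,P]=QP-PQ$; $\delta_{a,b}$ is the Kronecker delta. Vector fields on $\mathbb{R}^3$ are first-order operators $\tau\partial_t+\xi\partial_x+\eta\partial_u$ with smooth coefficients in $(t,x,u)$ (analogously with fewer variables for $k<3$). *)

theory Defs
  imports "HOL-Analysis.Analysis"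
begin

fun hdiff :: "('a::real_normed_vector) list \<Rightarrow> ('a \<Rightarrow> 'b::real_normed_vector) \<Rightarrow> 'a \<Rightarrow> 'b" where
  "hdiff [] f = f"
| "hdiff (v # vs) f = (\<lambda>x. frechet_derivative (hdiff vs f) (at x) v)"

definition smooth :: "('a::real_normed_vector \<Rightarrow> 'b::real_normed_vector) \<Rightarrow> bool" where
  "smooth f \<longleftrightarrow> (\<forall>vs x. hdiff vs f differentiable (at x))"

text \<open>Commutator [Q,P] = QP - PQ of vector fields Q, P viewed as first-order operators:
  [Q,P](x) = DP(x)(Q(x)) - DQ(x)(P(x)).\<close>
definition lie_bracket :: "('a::real_normed_vector \<Rightarrow> 'a) \<Rightarrow> ('a \<Rightarrow> 'a) \<Rightarrow> 'a \<Rightarrow> 'a" where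
  "lie_bracket Q P = (\<lambda>x. frechet_derivative P (at x) (Q x) - frechet_derivative Q (at x) (P x))"

end

theory Submission
  imports Defs
begin

text \<open>Suppose C p \<noteq> 0 and let \<theta> be a linear functional with \<theta> (C p) = 1. In dimension k \<le> 3
  the seven fields C, L (n + r 1), ..., L (n + r 6) admit a nontrivial linear combination X
  with X p = 0 and \<theta> \<circ> DX(p) = 0, since these are only 2k \<le> 6 linear conditions; then
  \<theta> ([X, L j] p) = 0 for every j. Taking j = -(n + r i) for the index i of the largest
  coefficient isolates the central term, which is cubic in n, whereas the remaining terms are
  linear in n. For large n this is impossible.\<close>

lemma linear_map_nontrivial_kernel:
  fixes f :: "'a::euclidean_space \<Rightarrow> 'b::euclidean_space"
  assumes "linear f" "DIM('b) < DIM('a)"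
  obtains z where "z \<noteq> 0" "f z = 0"
proof -
  have "\<not> inj f"
  proof
    assume "inj f"
    then have "dim (range f) = DIM('a)"
      using dim_image_eq[OF assms(1)] by (simp add: dim_UNIV)
    moreover have "dim (range f) \<le> DIM('b)" by (rule dim_subset_UNIV)
    ultimately show False using assms(2) by simp
  qed
  with that show thesis using linear_injective_0[OF assms(1)] by auto
qed

lemma exists_nontrivial_linear_relation:
  fixes v :: "'i::finite \<Rightarrow> 'b::euclidean_space"
  assumes "DIM('b) < CARD('i)"
  obtains b where "b \<noteq> (\<lambda>_. 0)" "(\<Sum>i\<in>UNIV. b i *\<^sub>R v i) = 0"
proof -
  have "linear (\<lambda>z::real^'i. \<Sum>i\<in>UNIV. z $ i *\<^sub>R v i)"
    by (rule linearI) (simp_all add: scaleR_add_left sum.distrib scaleR_sum_right)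
  then obtain z :: "real^'i" where "z \<noteq> 0" "(\<Sum>i\<in>UNIV. z $ i *\<^sub>R v i) = 0"
    using assms by (auto elim: linear_map_nontrivial_kernel)
  moreover from \<open>z \<noteq> 0\<close> have "(\<lambda>i. z $ i) \<noteq> (\<lambda>_. 0)" by (simp add: vec_eq_iff fun_eq_iff)
  ultimately show thesis using that by blast
qed

lemma exists_combination_vanishing_to_first_order:
  fixes F :: "'i::finite \<Rightarrow> 'a::euclidean_space \<Rightarrow> 'a" and \<theta> :: "'a \<Rightarrow> real"
  assumes \<theta>: "linear \<theta>" and dim: "2 * DIM('a) < CARD('i)"
    and F: "\<And>i. F i differentiable (at p)"
  obtains b where "b \<noteq> (\<lambda>_. 0)" "(\<Sum>i\<in>UNIV. b i *\<^sub>R F i p) = 0"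
    "\<And>w. (\<Sum>i\<in>UNIV. b i * \<theta> (frechet_derivative (F i) (at p) w)) = 0"
proof -
  \<comment> \<open>the gradient of \<open>\<theta> \<circ> DF_i(p)\<close> turns the derivative condition into a vector equation\<close>
  define grad where "grad i = adjoint (\<lambda>w. \<theta> (frechet_derivative (F i) (at p) w)) 1" for i
  have grad: "w \<bullet> grad i = \<theta> (frechet_derivative (F i) (at p) w)" for i w
    unfolding grad_def
    by (simp add: adjoint_works linear_compose[OF linear_frechet_derivative[OF F] \<theta>, unfolded o_def])
  obtain b where "b \<noteq> (\<lambda>_. 0)" and rel: "(\<Sum>i\<in>UNIV. b i *\<^sub>R (F i p, grad i)) = 0"
    using exists_nontrivial_linear_relation[of "\<lambda>i. (F i p, grad i)"] dim by auto
  moreover from rel have "(\<Sum>i\<in>UNIV. b i *\<^sub>R F i p) = 0"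
    by (simp add: sum_prod zero_prod_def)
  moreover from rel have "(\<Sum>i\<in>UNIV. b i *\<^sub>R grad i) = 0"
    by (simp add: sum_prod zero_prod_def)
  then have "(\<Sum>i\<in>UNIV. b i * \<theta> (frechet_derivative (F i) (at p) w)) = 0" for w
    using inner_sum_right[of w "\<lambda>i. b i *\<^sub>R grad i" UNIV] by (simp add: grad)
  ultimately show thesis using that by blast
qed

lemma smooth_differentiable: "smooth f \<Longrightarrow> f differentiable (at x)"
  unfolding smooth_def by (metis hdiff.simps(1))

lemma lie_bracket_antisym: "lie_bracket Q P x = - lie_bracket P Q x"
  by (simp add: lie_bracket_def)

lemma lie_bracket_combination_vanishes:
  fixes F :: "'i \<Rightarrow> 'a::real_normed_vector \<Rightarrow> 'a" and \<theta> :: "'a \<Rightarrow> real"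
  assumes \<theta>: "linear \<theta>" and G: "G differentiable (at p)"
    and value_zero: "(\<Sum>i\<in>I. b i *\<^sub>R F i p) = 0"
    and derivative_zero: "\<And>w. (\<Sum>i\<in>I. b i * \<theta> (frechet_derivative (F i) (at p) w)) = 0"
  shows "(\<Sum>i\<in>I. b i * \<theta> (lie_bracket (F i) G p)) = 0"
proof -
  define DG where "DG = frechet_derivative G (at p)"
  have DG: "linear DG" unfolding DG_def by (rule linear_frechet_derivative[OF G])
  have "(\<Sum>i\<in>I. b i * \<theta> (lie_bracket (F i) G p))
      = \<theta> (DG (\<Sum>i\<in>I. b i *\<^sub>R F i p)) - (\<Sum>i\<in>I. b i * \<theta> (frechet_derivative (F i) (at p) (G p)))"
    by (simp add: lie_bracket_def DG_def[symmetric] linear_diff[OF \<theta>] linear_sum[OF \<theta>]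
        linear_sum[OF DG] linear_scale[OF \<theta>] linear_scale[OF DG] o_def
        right_diff_distrib sum_subtractf)
  also have "\<dots> = 0"
    by (simp add: value_zero derivative_zero linear_0[OF DG] linear_0[OF \<theta>])
  finally show ?thesis .
qed

text \<open>If \<theta> (C p) = 1 and \<kappa> s = \<theta> (L s p), then virasoro_coord \<kappa> m j = \<theta> ([L m, L j] p).\<close>

definition virasoro_coord :: "(int \<Rightarrow> real) \<Rightarrow> int \<Rightarrow> int \<Rightarrow> real" where
  "virasoro_coord \<kappa> m j =
     of_int (m - j) * \<kappa> (m + j) + (if m = - j then 1 else 0) * of_int (m * (m\<^sup>2 - 1)) / 12"

lemma linear_lt_cubic:
  fixes a x :: real
  assumes "0 \<le> a" "a + 2 \<le> x"
  shows "a * x < x * (x\<^sup>2 - 1)"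
proof -
  have "2 * x \<le> x\<^sup>2" using assms by (simp add: power2_eq_square mult_right_mono)
  then have "a < x\<^sup>2 - 1" using assms by linarith
  then show ?thesis using assms by (simp add: mult.commute)
qed

lemma cubic_mono:
  fixes m n :: real
  assumes "1 \<le> n" "n \<le> m"
  shows "n * (n\<^sup>2 - 1) \<le> m * (m\<^sup>2 - 1)"
proof -
  have "n\<^sup>2 \<le> m\<^sup>2" using assms by (simp add: power_mono)
  moreover have "0 \<le> n\<^sup>2 - 1" using assms by simp
  ultimately show ?thesis using assms by (intro mult_mono) auto
qed

lemma virasoro_coord_sum_opposite_shift:
  fixes r :: "'i::finite \<Rightarrow> nat" and n :: int and i0 :: 'i
  assumes r: "inj r"
  defines "m \<equiv> n + int (r i0)"
  shows "(\<Sum>i\<in>UNIV. b i * virasoro_coord \<kappa> (n + int (r i)) (- m))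
       = (\<Sum>i\<in>UNIV. b i * (of_int (n + int (r i) + m) * \<kappa> (int (r i) - int (r i0))))
         + b i0 * of_int (m * (m\<^sup>2 - 1)) / 12"
proof -
  have "b i * virasoro_coord \<kappa> (n + int (r i)) (- m)
      = b i * (of_int (n + int (r i) + m) * \<kappa> (int (r i) - int (r i0)))
        + (if i = i0 then b i0 * of_int (m * (m\<^sup>2 - 1)) / 12 else 0)" for i
    by (auto simp: virasoro_coord_def m_def distrib_left inj_eq[OF r])
  then show ?thesis by (simp add: sum.distrib)
qed

text \<open>With i0 the index of the largest |b i|, the relation for j = -(n + r i0) pits the central
  term, cubic in n, against terms bounded linearly in n.\<close>

lemma shifted_virasoro_relations_trivial:
  fixes \<kappa> :: "int \<Rightarrow> real" and r :: "'i::finite \<Rightarrow> nat"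
  assumes "inj r"
  obtains n where
    "\<And>b. (\<And>j. (\<Sum>i\<in>UNIV. b i * virasoro_coord \<kappa> (n + int (r i)) j) = 0) \<Longrightarrow> b = (\<lambda>_. 0)"
proof -
  define d where "d = int (Max (range r))"
  have r_le: "int (r i) \<le> d" for i unfolding d_def by simp
  define c where "c = real CARD('i)"
  define K where "K = (\<Sum>s\<in>{-d..d}. \<bar>\<kappa> s\<bar>)"
  have K: "\<bar>\<kappa> s\<bar> \<le> K" if "\<bar>s\<bar> \<le> d" for s
    unfolding K_def using that by (intro member_le_sum) auto
  have "0 \<le> K" unfolding K_def by (simp add: sum_nonneg)
  then have cK: "0 \<le> 36 * c * K" by (simp add: c_def)
  define n where "n = \<lceil>36 * c * K\<rceil> + 2 * d + 2"
  have "0 \<le> d" unfolding d_def by simp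
  then have n_big: "36 * c * K + 2 \<le> of_int n" "2 * d \<le> n" "1 \<le> n"
    unfolding n_def using cK le_of_int_ceiling[of "36 * c * K"] by linarith+
  show thesis
  proof (rule that, rule ccontr)
    fix b :: "'i \<Rightarrow> real"
    assume rel: "\<And>j. (\<Sum>i\<in>UNIV. b i * virasoro_coord \<kappa> (n + int (r i)) j) = 0"
      and "b \<noteq> (\<lambda>_. 0)"
    have "Max (range (\<lambda>i. \<bar>b i\<bar>)) \<in> range (\<lambda>i. \<bar>b i\<bar>)" by (rule Max_in) auto
    then obtain i0 where "\<bar>b i0\<bar> = Max (range (\<lambda>i. \<bar>b i\<bar>))" by (metis imageE)
    then have i0_max: "\<bar>b i\<bar> \<le> \<bar>b i0\<bar>" for i by simp
    with \<open>b \<noteq> (\<lambda>_. 0)\<close> have b0: "0 < \<bar>b i0\<bar>" by (force simp: fun_eq_iff)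
    define m where "m = n + int (r i0)"
    define W where "W = of_int (m * (m\<^sup>2 - 1)) / (12::real)"
    define A where "A i = b i * (of_int (n + int (r i) + m) * \<kappa> (int (r i) - int (r i0)))" for i
    have A_bound: "\<bar>A i\<bar> \<le> \<bar>b i0\<bar> * (3 * of_int n * K)" for i
    proof -
      have "of_int (n + int (r i) + m) \<le> 3 * real_of_int n" "\<bar>\<kappa> (int (r i) - int (r i0))\<bar> \<le> K"
        using r_le[of i] r_le[of i0] n_big(2) m_def by (auto intro: K)
      then show ?thesis
        unfolding A_def abs_mult using i0_max[of i] \<open>0 \<le> K\<close> n_big(3) m_def
        by (intro mult_mono) auto
    qed
    have "(\<Sum>i\<in>UNIV. A i) = - (b i0 * W)"
      using rel[of "- m"] virasoro_coord_sum_opposite_shift[OF \<open>inj r\<close>, of b \<kappa> n i0]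
      unfolding A_def W_def m_def by simp
    then have "\<bar>b i0\<bar> * \<bar>W\<bar> = \<bar>\<Sum>i\<in>UNIV. A i\<bar>" by (simp add: abs_mult)
    also have "\<dots> \<le> c * (\<bar>b i0\<bar> * (3 * of_int n * K))"
      unfolding c_def by (rule order_trans[OF sum_abs sum_bounded_above[OF A_bound]])
    also have "\<dots> = \<bar>b i0\<bar> * (3 * c * K * of_int n)" by (simp add: mult_ac)
    finally have "\<bar>W\<bar> \<le> 3 * c * K * of_int n" using b0 by (simp add: mult_le_cancel_left_pos)
    moreover have "of_int n * ((of_int n)\<^sup>2 - 1) / 12 \<le> W"
      unfolding W_def using cubic_mono[of "of_int n" "of_int m"] n_big(3) m_def by auto
    ultimately have "36 * c * K * of_int n \<ge> of_int n * ((of_int n)\<^sup>2 - 1)" by linarith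
    with linear_lt_cubic[OF cK n_big(1)] show False by simp
  qed
qed

lemma sum_UNIV_option: "(\<Sum>x\<in>UNIV. f x) = f None + (\<Sum>i\<in>(UNIV :: 'a::finite set). f (Some i))"
  by (simp add: UNIV_option_conv sum.reindex)

lemma virasoro_realization_central_vanishes:
  fixes C :: "'a::euclidean_space \<Rightarrow> 'a" and L :: "int \<Rightarrow> 'a \<Rightarrow> 'a"
  assumes dim: "DIM('a) \<le> 3"
    and C: "C differentiable (at p)" and L: "\<And>n. L n differentiable (at p)"
    and virasoro: "\<And>m n. lie_bracket (L m) (L n) p =
           of_int (m - n) *\<^sub>R L (m + n) p
           + ((if m = - n then 1 else 0) * of_int (m * (m\<^sup>2 - 1)) / 12) *\<^sub>R C p"
    and central: "\<And>m. lie_bracket (L m) C p = 0"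
  shows "C p = 0"
proof (rule ccontr)
  assume Cp: "C p \<noteq> 0"
  define \<theta> where "\<theta> w = (C p \<bullet> w) / (C p \<bullet> C p)" for w
  have \<theta>: "linear \<theta>" unfolding \<theta>_def
    by (rule linearI) (simp_all add: inner_add_right add_divide_distrib)
  have \<theta>_Cp: "\<theta> (C p) = 1" unfolding \<theta>_def using Cp by simp
  define \<kappa> where "\<kappa> s = \<theta> (L s p)" for s
  have bracket_coord: "\<theta> (lie_bracket (L m) (L j) p) = virasoro_coord \<kappa> m j" for m j
    using \<theta>_Cp by (simp add: virasoro virasoro_coord_def \<kappa>_def linear_add[OF \<theta>] linear_scale[OF \<theta>])
  obtain n where n: "\<And>b. (\<And>j. (\<Sum>i\<in>UNIV. b i * virasoro_coord \<kappa> (n + int (to_nat (i :: 6))) j) = 0)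
      \<Longrightarrow> b = (\<lambda>_. 0)"
    using shifted_virasoro_relations_trivial[OF inj_to_nat] by blast
  define F where "F = case_option C (\<lambda>i :: 6. L (n + int (to_nat i)))"
  have "F i differentiable (at p)" for i
    using C L unfolding F_def by (cases i) auto
  moreover have "2 * DIM('a) < CARD(6 option)"
    using dim by (simp add: UNIV_option_conv card_image)
  ultimately obtain b where "b \<noteq> (\<lambda>_. 0)" and value_zero: "(\<Sum>i\<in>UNIV. b i *\<^sub>R F i p) = 0"
    and derivative_zero: "\<And>w. (\<Sum>i\<in>UNIV. b i * \<theta> (frechet_derivative (F i) (at p) w)) = 0"
    using exists_combination_vanishing_to_first_order[OF \<theta>] by blast
  have "(\<Sum>i\<in>UNIV. b i * \<theta> (lie_bracket (F i) (L j) p)) = 0" for j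
    by (rule lie_bracket_combination_vanishes[OF \<theta> L value_zero derivative_zero])
  then have "(\<Sum>i\<in>UNIV. b (Some i) * virasoro_coord \<kappa> (n + int (to_nat i)) j) = 0" for j
    by (simp add: sum_UNIV_option F_def lie_bracket_antisym[of C] central bracket_coord linear_0[OF \<theta>])
  then have "b \<circ> Some = (\<lambda>_. 0)" using n by (simp add: o_def)
  then have "b None = 0" using value_zero Cp by (simp add: sum_UNIV_option F_def fun_eq_iff)
  with \<open>b \<circ> Some = (\<lambda>_. 0)\<close> have "b x = 0" for x by (cases x) (auto simp: fun_eq_iff)
  with \<open>b \<noteq> (\<lambda>_. 0)\<close> show False by auto
qed

theorem theorem4:
  fixes dummy :: "real ^ 'k"
  assumes "CARD('k) \<le> 3"
  shows "\<not> (\<exists>(C :: real ^ 'k \<Rightarrow> real ^ 'k) (L :: int \<Rightarrow> real ^ 'k \<Rightarrow> real ^ 'k).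
            smooth C \<and> (\<forall>n. smooth (L n)) \<and> C \<noteq> (\<lambda>x. 0) \<and>
            (\<forall>m n. lie_bracket (L m) (L n) =
                 (\<lambda>x. of_int (m - n) *\<^sub>R L (m + n) x
                      + ((if m = - n then 1 else 0) * of_int (m * (m\<^sup>2 - 1)) / 12) *\<^sub>R C x)) \<and>
            (\<forall>m. lie_bracket (L m) C = (\<lambda>x. 0)))"
proof (intro notI, elim exE conjE)
  fix C :: "real ^ 'k \<Rightarrow> real ^ 'k" and L :: "int \<Rightarrow> real ^ 'k \<Rightarrow> real ^ 'k"
  assume smooth: "smooth C" "\<forall>n. smooth (L n)" and "C \<noteq> (\<lambda>x. 0)"
    and virasoro: "\<forall>m n. lie_bracket (L m) (L n) = (\<lambda>x. of_int (m - n) *\<^sub>R L (m + n) x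
           + ((if m = - n then 1 else 0) * of_int (m * (m\<^sup>2 - 1)) / 12) *\<^sub>R C x)"
    and central: "\<forall>m. lie_bracket (L m) C = (\<lambda>x. 0)"
  have "C p = 0" for p
  proof (rule virasoro_realization_central_vanishes[where C = C and L = L])
    show "DIM(real ^ 'k) \<le> 3" using assms by simp
    show "C differentiable (at p)" using smooth(1) by (rule smooth_differentiable)
    show "L n differentiable (at p)" for n using smooth(2) by (simp add: smooth_differentiable)
    show "lie_bracket (L m) (L n) p = of_int (m - n) *\<^sub>R L (m + n) p
        + ((if m = - n then 1 else 0) * of_int (m * (m\<^sup>2 - 1)) / 12) *\<^sub>R C p" for m n
      using virasoro by simp
    show "lie_bracket (L m) C p = 0" for m using central by simp
  qed
  with \<open>C \<noteq> (\<lambda>x. 0)\<close> show False by auto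
qed

end
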